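(* Let $M=A+\Delta-\sigma vv^{\mathsf T}$ be a generalized modularity matrix, let $x\neq0$ satisfy $Mx=m_Gx$ with $v^{\mathsf T}x\ge 0$, and let $y$ be an entrywise positive eigenvector of $A+\Delta$ associated with $\lambda_1(A+\Delta)$. Then for every $\varepsilon\ge 0$, the set $S=\{i\in V: x_i+\varepsilon y_i\ge 0\}$ induces a connected subgraph $G(S)$ of $G$.
   Context: Let $V=\{1,\dots,n\}$ and let $A\in\mathbb{R}^{n\times n}$ be the adjacency matrix of an undirected connected weighted graph $G$ on $V$, possibly with loops, i.e. $A=(a_{ij})$ is symmetric, entrywise nonnegative and irreducible. A generalized modularity matrix is any matrix $M=A+\Delta-\sigma vv^{\mathsf T}$ where $\Delta$ is a real diagonal $n\times n$ matrix, $v\in\mathbb{R}^n$ is a nonzero entrywise nonnegative vector, and $\sigma>0$. Eigenvalues of a real symmetric matrix $X$ are ordered $\lambda_1(X)\ge\cdots\ge\lambda_n(X)$; $m_G:=\lambda_1(M)$. (An entrywise positive eigenvector $y$ for $\lambda_1(A+\Delta)$ exists by Perron–Frobenius theory.) For $S\subseteq V$, $G(S)$ denotes the subgraph induced by $S$, whose adjacency matrix is the principal submatrix $A(S)$; it is connected if the graph on vertex set $S$ in which distinct $i,j$ are adjacent iff $a_{ij}>0$ is connected. *)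

theory Defs
  imports "HOL-Analysis.Analysis"
begin

text \<open>Vertex set V = the finite type 'n; matrices are real^'n^'n.\<close>

definition is_eigenvalue :: "real^'n^'n \<Rightarrow> real \<Rightarrow> bool" where
  "is_eigenvalue X l \<longleftrightarrow> (\<exists>x. x \<noteq> 0 \<and> X *v x = l *\<^sub>R x)"

definition lambda_max :: "real^'n^'n \<Rightarrow> real" where
  "lambda_max X = Max {l. is_eigenvalue X l}"

definition outer :: "real^'n \<Rightarrow> real^'n \<Rightarrow> real^'n^'n" where
  "outer u w = (\<chi> i j. u $ i * w $ j)"

definition adj :: "real^'n^'n \<Rightarrow> 'n \<Rightarrow> 'n \<Rightarrow> bool" where
  "adj A i j \<longleftrightarrow> i \<noteq> j \<and> A $ i $ j > 0"

definition induced_connected :: "real^'n^'n \<Rightarrow> 'n set \<Rightarrow> bool" where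
  "induced_connected A S \<longleftrightarrow>
     (\<forall>i\<in>S. \<forall>j\<in>S. (i, j) \<in> {(a, b). a \<in> S \<and> b \<in> S \<and> adj A a b}\<^sup>*)"

end

theory Submission
  imports Defs
begin

text \<open>Write \<open>B = A + \<Delta>\<close>, \<open>M = B - \<sigma> v v\<^sup>T\<close>, \<open>m = \<lambda>\<^sub>1(M)\<close> and \<open>z = x + \<epsilon> y\<close>.
  A rank-one downdate can only lower the Rayleigh quotient and the positive eigenvector \<open>y\<close>
  makes \<open>\<lambda>\<^sub>1(B)\<close> the maximum of the Rayleigh quotient of \<open>B\<close>, so \<open>m \<le> \<lambda>\<^sub>1(B)\<close> and hence
  \<open>(B z)\<^sub>i \<ge> m z\<^sub>i\<close> for all \<open>i\<close>. Suppose \<open>S = {z \<ge> 0}\<close> splits into parts \<open>S\<^sub>1\<close>, \<open>S\<^sub>2\<close> with no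
  edges between them. Neighbours outside \<open>S\<close> contribute nonpositive terms, so the restrictions
  \<open>z\<^sub>S\<^sub>1\<close>, \<open>z\<^sub>S\<^sub>2\<close> still satisfy \<open>(B z\<^sub>S\<^sub>k)\<^sub>i \<ge> m z\<^sub>i\<close> on their supports. A nonzero combination
  \<open>u\<close> of them orthogonal to \<open>v\<close> then has \<open>u\<^sup>T M u = u\<^sup>T B u \<ge> m u\<^sup>T u\<close>, so \<open>u\<close> is an eigenvector
  of \<open>M\<close>, which forces those nonpositive contributions to vanish: some part has no neighbour
  outside itself, contradicting the connectivity of \<open>G\<close>.\<close>

lemma inner_matrix_vector_sum:
  "(u::real^'n) \<bullet> (M *v w) = (\<Sum>i\<in>UNIV. \<Sum>j\<in>UNIV. u$i * M$i$j * w$j)"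
  by (simp add: inner_vec_def matrix_vector_mult_def sum_distrib_left mult.assoc)

lemma symmetric_matrix_inner_commute:
  fixes M :: "real^'n^'n"
  assumes "transpose M = M"
  shows "u \<bullet> (M *v w) = w \<bullet> (M *v u)"
  by (metis assms dot_lmul_matrix inner_commute transpose_matrix_vector)

lemma linear_coeff_nonpos_if_quadratic_nonpos:
  fixes a b :: real
  assumes "\<And>t. t > 0 \<Longrightarrow> 2 * t * a + t\<^sup>2 * b \<le> 0"
  shows "a \<le> 0"
proof (rule ccontr)
  assume "\<not> a \<le> 0"
  define t where "t = a / (\<bar>b\<bar> + 1)"
  have t: "t > 0" "t * \<bar>b\<bar> < a" using \<open>\<not> a \<le> 0\<close> by (auto simp: t_def field_simps)
  have "- (t * \<bar>b\<bar>) \<le> t * b"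
    using mult_left_mono[OF abs_ge_minus_self[of b], of t] t(1) by simp
  then have "2 * a + t * b > 0" using t \<open>\<not> a \<le> 0\<close> by linarith
  then have "t * (2 * a + t * b) > 0" using t(1) by simp
  then show False using assms[OF t(1)] by (simp add: power2_eq_square algebra_simps)
qed

lemma eigenvector_if_rayleigh_bound_attained:
  fixes M :: "real^'n^'n"
  assumes sym: "transpose M = M"
    and bound: "\<And>w. w \<bullet> (M *v w) \<le> \<mu> * (w \<bullet> w)"
    and attained: "\<mu> * (u \<bullet> u) \<le> u \<bullet> (M *v u)"
  shows "M *v u = \<mu> *\<^sub>R u"
proof -
  define w where "w = M *v u - \<mu> *\<^sub>R u"
  have ww: "w \<bullet> w = w \<bullet> (M *v u) - \<mu> * (w \<bullet> u)"
    by (simp add: w_def inner_diff_right)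
  have "w \<bullet> w \<le> 0"
  proof (rule linear_coeff_nonpos_if_quadratic_nonpos)
    fix t :: real
    have "(u + t *\<^sub>R w) \<bullet> (M *v (u + t *\<^sub>R w)) - \<mu> * ((u + t *\<^sub>R w) \<bullet> (u + t *\<^sub>R w))
        = (u \<bullet> (M *v u) - \<mu> * (u \<bullet> u)) + 2 * t * (w \<bullet> w)
          + t\<^sup>2 * (w \<bullet> (M *v w) - \<mu> * (w \<bullet> w))"
      using symmetric_matrix_inner_commute[OF sym, of u w]
      by (simp add: ww inner_add_left inner_add_right matrix_vector_right_distrib
          matrix_vector_mult_scaleR inner_commute power2_eq_square algebra_simps)
    then show "2 * t * (w \<bullet> w) + t\<^sup>2 * (w \<bullet> (M *v w) - \<mu> * (w \<bullet> w)) \<le> 0"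
      using bound[of "u + t *\<^sub>R w"] attained by linarith
  qed
  then have "w = 0" by (meson inner_eq_zero_iff inner_ge_zero order_antisym)
  then show ?thesis by (simp add: w_def)
qed

lemma finite_eigenvalues_symmetric:
  fixes M :: "real^'n^'n"
  assumes sym: "transpose M = M"
  shows "finite {l. is_eigenvalue M l}"
proof -
  define L where "L = {l. is_eigenvalue M l}"
  define ev where "ev l = (SOME x. x \<noteq> 0 \<and> M *v x = l *\<^sub>R x)" for l
  have ev: "ev l \<noteq> 0 \<and> M *v ev l = l *\<^sub>R ev l" if "l \<in> L" for l
    using that unfolding L_def is_eigenvalue_def ev_def mem_Collect_eq by (rule someI_ex)
  have orth: "ev l \<bullet> ev l' = 0" if "l \<in> L" "l' \<in> L" "l \<noteq> l'" for l l'
  proof -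
    have "l * (ev l \<bullet> ev l') = ev l' \<bullet> (M *v ev l)"
      using ev[OF that(1)] by (simp add: inner_commute)
    also have "\<dots> = ev l \<bullet> (M *v ev l')" by (rule symmetric_matrix_inner_commute[OF sym])
    also have "\<dots> = l' * (ev l \<bullet> ev l')" using ev[OF that(2)] by simp
    finally show ?thesis using that(3) by simp
  qed
  have "inj_on ev L"
    by (rule inj_onI) (metis ev inner_eq_zero_iff orth)
  moreover have "independent (ev ` L)"
    by (rule pairwise_orthogonal_independent) (use ev orth in \<open>auto simp: pairwise_def orthogonal_def\<close>)
  then have "finite (ev ` L)" using independent_bound by blast
  ultimately show ?thesis using finite_imageD unfolding L_def by blast
qed

lemma rayleigh_le_lambda_max:
  fixes M :: "real^'n^'n"
  assumes sym: "transpose M = M"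
  shows "u \<bullet> (M *v u) \<le> lambda_max M * (u \<bullet> u)"
proof -
  define f where "f w = w \<bullet> (M *v w)" for w :: "real^'n"
  have "continuous_on (sphere 0 1) f"
    unfolding f_def by (intro continuous_intros linear_continuous_on matrix_vector_mul_bounded_linear)
  moreover have "sphere (0::real^'n) 1 \<noteq> {}" by simp
  ultimately obtain u0 where u0: "u0 \<in> sphere 0 1" "\<And>w. w \<in> sphere 0 1 \<Longrightarrow> f w \<le> f u0"
    using continuous_attains_sup[OF compact_sphere] by blast
  have bound: "f w \<le> f u0 * (w \<bullet> w)" for w
  proof (cases "w = 0")
    case False
    have "f (w /\<^sub>R norm w) \<le> f u0" using False u0(2) by simp
    moreover have "f w = (norm w)\<^sup>2 * f (w /\<^sub>R norm w)"
      using False by (simp add: f_def matrix_vector_mult_scaleR power2_eq_square field_simps)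
    ultimately show ?thesis
      by (metis mult.commute mult_left_mono power2_norm_eq_inner zero_le_power2)
  qed (simp add: f_def)
  have "u0 \<bullet> u0 = 1" using u0(1) by (simp add: power2_norm_eq_inner[symmetric])
  then have "M *v u0 = f u0 *\<^sub>R u0"
    using eigenvector_if_rayleigh_bound_attained[OF sym, of "f u0" u0] bound unfolding f_def by simp
  moreover have "u0 \<noteq> 0" using u0(1) by auto
  ultimately have "is_eigenvalue M (f u0)" unfolding is_eigenvalue_def by blast
  then have "f u0 \<le> lambda_max M"
    unfolding lambda_max_def using finite_eigenvalues_symmetric[OF sym] by simp
  then have "f u0 * (u \<bullet> u) \<le> lambda_max M * (u \<bullet> u)" by (rule mult_right_mono) simp
  then show ?thesis using bound[of u] unfolding f_def by linarith
qed

lemma rayleigh_le_eigenvalue_of_positive_eigenvector: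
  fixes B :: "real^'n^'n"
  assumes sym: "transpose B = B"
    and off_diag: "\<And>i j. i \<noteq> j \<Longrightarrow> B$i$j \<ge> 0"
    and y_pos: "\<And>i. y$i > 0"
    and y_eig: "B *v y = l *\<^sub>R y"
  shows "u \<bullet> (B *v u) \<le> l * (u \<bullet> u)"
proof -
  have B_sym: "B$i$j = B$j$i" for i j using sym by (metis transpose_def vec_lambda_beta)
  have y_row: "(\<Sum>j\<in>UNIV. B$i$j * y$j) = l * y$i" for i
    using arg_cong[OF y_eig, of "\<lambda>z. z$i"] by (simp add: matrix_vector_mult_def)
  define P where "P i j = B$i$j * y$j * (u$i)\<^sup>2 / y$i" for i j
  define Q where "Q i j = B$i$j * u$i * u$j" for i j
  have lhs: "u \<bullet> (B *v u) = (\<Sum>i\<in>UNIV. \<Sum>j\<in>UNIV. Q i j)"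
    unfolding inner_matrix_vector_sum Q_def by (simp add: mult.assoc mult.left_commute)
  have "(u$i)\<^sup>2 / y$i * (l * y$i) = l * (u$i * u$i)" for i
    using y_pos[of i] by (simp add: power2_eq_square)
  then have "l * (u \<bullet> u) = (\<Sum>i\<in>UNIV. (u$i)\<^sup>2 / y$i * (l * y$i))"
    by (simp add: inner_vec_def sum_distrib_left)
  also have "\<dots> = (\<Sum>i\<in>UNIV. \<Sum>j\<in>UNIV. P i j)"
    unfolding y_row[symmetric] P_def by (simp add: sum_distrib_left mult.commute mult.left_commute)
  finally have rhs: "l * (u \<bullet> u) = (\<Sum>i\<in>UNIV. \<Sum>j\<in>UNIV. P i j)" .
  \<comment> \<open>Symmetrizing \<open>P - Q\<close> gives a sum of squares weighted by the off-diagonal entries.\<close>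
  have square: "P i j - 2 * Q i j + P j i = B$i$j * y$i * y$j * (u$i / y$i - u$j / y$j)\<^sup>2" for i j
  proof -
    have "y$i \<noteq> 0" "y$j \<noteq> 0" using y_pos[of i] y_pos[of j] by auto
    then show ?thesis unfolding P_def Q_def B_sym[of j i] by (simp add: field_simps power2_eq_square)
  qed
  have "0 \<le> B$i$j * y$i * y$j * (u$i / y$i - u$j / y$j)\<^sup>2" for i j
    using off_diag[of i j] y_pos[of i] y_pos[of j] by (cases "i = j") auto
  then have "0 \<le> (\<Sum>i\<in>UNIV. \<Sum>j\<in>UNIV. P i j - 2 * Q i j + P j i)"
    unfolding square by (intro sum_nonneg)
  also have "\<dots> = 2 * ((\<Sum>i\<in>UNIV. \<Sum>j\<in>UNIV. P i j) - (\<Sum>i\<in>UNIV. \<Sum>j\<in>UNIV. Q i j))"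
    using sum.swap[of P UNIV UNIV] by (simp add: sum.distrib sum_subtractf sum_distrib_left)
  finally show ?thesis using lhs rhs by simp
qed

lemma adj_closed_eq_UNIV:
  assumes conn: "induced_connected A UNIV"
    and closed: "\<forall>a\<in>T. \<forall>b. adj A a b \<longrightarrow> b \<in> T"
    and "a \<in> T"
  shows "T = UNIV"
proof -
  have "b \<in> T" for b
  proof -
    have "(a, b) \<in> {(a, b). a \<in> UNIV \<and> b \<in> UNIV \<and> adj A a b}\<^sup>*"
      using conn unfolding induced_connected_def by blast
    then show ?thesis by (induction rule: rtrancl_induct) (use \<open>a \<in> T\<close> closed in auto)
  qed
  then show ?thesis by blast
qed

lemma not_induced_connected_split:
  assumes sym: "transpose A = A" and "\<not> induced_connected A S"
  obtains S1 S2 where "S1 \<union> S2 = S" "S1 \<inter> S2 = {}" "S1 \<noteq> {}" "S2 \<noteq> {}"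
    "\<And>a b. a \<in> S1 \<Longrightarrow> b \<in> S2 \<Longrightarrow> \<not> adj A a b \<and> \<not> adj A b a"
proof -
  let ?R = "{(a, b). a \<in> S \<and> b \<in> S \<and> adj A a b}"
  obtain i j where ij: "i \<in> S" "j \<in> S" "(i, j) \<notin> ?R\<^sup>*"
    using assms(2) unfolding induced_connected_def by blast
  define S1 where "S1 = {k \<in> S. (i, k) \<in> ?R\<^sup>*}"
  have adj_sym: "adj A a b \<longleftrightarrow> adj A b a" for a b
    using sym unfolding adj_def by (metis transpose_def vec_lambda_beta)
  have closed: "b \<in> S1" if "a \<in> S1" "b \<in> S" "adj A a b" for a b
  proof -
    from \<open>a \<in> S1\<close> have "a \<in> S" "(i, a) \<in> ?R\<^sup>*" by (simp_all add: S1_def)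
    with that have "(i, b) \<in> ?R\<^sup>*" by (blast intro: rtrancl_into_rtrancl)
    with \<open>b \<in> S\<close> show ?thesis by (simp add: S1_def)
  qed
  show ?thesis
  proof (rule that[of S1 "S - S1"])
    show "S1 \<union> (S - S1) = S" "S1 \<inter> (S - S1) = {}" by (auto simp: S1_def)
    show "S1 \<noteq> {}" "S - S1 \<noteq> {}" using ij by (auto simp: S1_def)
    show "\<not> adj A a b \<and> \<not> adj A b a" if "a \<in> S1" "b \<in> S - S1" for a b
      using closed that adj_sym by blast
  qed
qed

definition restrict_vec :: "'n set \<Rightarrow> real^'n \<Rightarrow> real^'n" where
  "restrict_vec T z = (\<chi> i. if i \<in> T then z$i else 0)"

lemma matrix_vector_mult_restrict_vec:
  "(B *v restrict_vec T z)$i = (B *v z)$i - (\<Sum>j\<in>-T. B$i$j * z$j)"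
proof -
  have "(B *v z)$i = (\<Sum>j\<in>T. B$i$j * z$j) + (\<Sum>j\<in>-T. B$i$j * z$j)"
    using sum.Int_Diff[of UNIV "\<lambda>j. B$i$j * z$j" T] by (simp add: matrix_vector_mult_def Compl_eq_Diff_UNIV)
  moreover have "(B *v restrict_vec T z)$i = (\<Sum>j\<in>T. B$i$j * z$j)"
    by (simp add: matrix_vector_mult_def restrict_vec_def if_distrib sum.If_cases)
  ultimately show ?thesis by simp
qed

lemma matrix_vector_mult_restrict_vec_eq_0:
  assumes "\<forall>j\<in>T. B$i$j = 0"
  shows "(B *v restrict_vec T z)$i = 0"
  using assms by (auto simp: matrix_vector_mult_def restrict_vec_def intro!: sum.neutral)

lemma restrict_vec_supersolution:
  fixes B :: "real^'n^'n"
  assumes outflow: "\<forall>j\<in>-T. B$i$j * z$j \<le> 0"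
  shows "(B *v z)$i \<le> (B *v restrict_vec T z)$i"
    and "(B *v restrict_vec T z)$i \<le> (B *v z)$i \<Longrightarrow> \<forall>j\<in>-T. B$i$j * z$j = 0"
proof -
  have "(\<Sum>j\<in>-T. B$i$j * z$j) \<le> 0" using outflow by (intro sum_nonpos) auto
  then show "(B *v z)$i \<le> (B *v restrict_vec T z)$i" by (simp add: matrix_vector_mult_restrict_vec)
  assume "(B *v restrict_vec T z)$i \<le> (B *v z)$i"
  then have "(\<Sum>j\<in>-T. - (B$i$j * z$j)) = 0"
    using \<open>(\<Sum>j\<in>-T. B$i$j * z$j) \<le> 0\<close> by (simp add: matrix_vector_mult_restrict_vec sum_negf)
  then show "\<forall>j\<in>-T. B$i$j * z$j = 0"
    using sum_nonneg_eq_0_iff[of "-T" "\<lambda>j. - (B$i$j * z$j)"] outflow by auto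
qed

lemma split_outflow_nonpos:
  fixes B :: "real^'n^'n"
  assumes off_diag: "\<And>i j. i \<noteq> j \<Longrightarrow> B$i$j \<ge> 0"
    and split: "T \<union> T' = {k. 0 \<le> z$k}" and "i \<in> T" and sep: "\<forall>j\<in>T'. B$i$j = 0"
  shows "\<forall>j\<in>-T. B$i$j * z$j \<le> 0"
proof
  fix j assume "j \<in> -T"
  show "B$i$j * z$j \<le> 0"
  proof (cases "j \<in> T'")
    case False
    with \<open>j \<in> -T\<close> have "j \<notin> T \<union> T'" by blast
    then have "z$j < 0" using split by (simp add: set_eq_iff not_le)
    moreover have "i \<noteq> j" using \<open>i \<in> T\<close> \<open>j \<in> -T\<close> by blast
    ultimately show ?thesis using off_diag by (simp add: mult_nonneg_nonpos)
  qed (use sep in simp)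
qed

lemma combination_restrict_vec_on_part:
  fixes B :: "real^'n^'n"
  assumes "i \<in> T" "T \<inter> T' = {}" "\<forall>j\<in>T'. B$i$j = 0"
  shows "(\<alpha> *\<^sub>R restrict_vec T z + \<beta> *\<^sub>R restrict_vec T' z)$i = \<alpha> * z$i"
    and "(B *v (\<alpha> *\<^sub>R restrict_vec T z + \<beta> *\<^sub>R restrict_vec T' z))$i
           = \<alpha> * (B *v restrict_vec T z)$i"
  using assms matrix_vector_mult_restrict_vec_eq_0[of T' B i z]
  by (auto simp: restrict_vec_def matrix_vector_right_distrib matrix_vector_mult_scaleR)

lemma split_combination_rayleigh_ge:
  fixes B :: "real^'n^'n" and \<alpha> \<beta> :: real
  assumes off_diag: "\<And>i j. i \<noteq> j \<Longrightarrow> B$i$j \<ge> 0"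
    and split: "T \<union> T' = {k. 0 \<le> z$k}" "T \<inter> T' = {}"
    and sep: "\<forall>a\<in>T. \<forall>b\<in>T'. B$a$b = 0" "\<forall>a\<in>T'. \<forall>b\<in>T. B$a$b = 0"
    and super: "\<And>i. 0 \<le> z$i \<Longrightarrow> m * z$i \<le> (B *v z)$i"
  defines "u \<equiv> \<alpha> *\<^sub>R restrict_vec T z + \<beta> *\<^sub>R restrict_vec T' z"
  shows "m * (u \<bullet> u) \<le> u \<bullet> (B *v u)"
proof -
  have part: "m * (\<gamma> * z$i) * (\<gamma> * z$i) \<le> (\<gamma> * z$i) * (\<gamma> * (B *v restrict_vec P z)$i)"
    if "P \<union> P' = {k. 0 \<le> z$k}" "i \<in> P" "\<forall>j\<in>P'. B$i$j = 0" for i P P' \<gamma>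
  proof -
    have z: "0 \<le> z$i" using that by auto
    have "m * z$i \<le> (B *v restrict_vec P z)$i"
      using super[OF z] restrict_vec_supersolution(1)[OF split_outflow_nonpos[OF off_diag that]]
      by linarith
    then have "\<gamma>\<^sup>2 * (z$i * (m * z$i)) \<le> \<gamma>\<^sup>2 * (z$i * (B *v restrict_vec P z)$i)"
      using z by (intro mult_left_mono) auto
    then show ?thesis by (simp add: power2_eq_square algebra_simps)
  qed
  have "m * (u$i * u$i) \<le> u$i * (B *v u)$i" for i
  proof -
    consider "i \<in> T" | "i \<in> T'" | "i \<notin> T \<union> T'" by blast
    then show ?thesis
    proof cases
      case 1
      have "\<forall>j\<in>T'. B$i$j = 0" using sep(1) 1 by blast
      then show ?thesis using part[OF split(1) 1] combination_restrict_vec_on_part[OF 1 split(2)]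
        by (simp add: u_def mult.assoc)
    next
      case 2
      have swap: "T' \<union> T = {k. 0 \<le> z$k}" "T' \<inter> T = {}"
        using split by (simp_all add: Un_commute Int_commute)
      have "\<forall>j\<in>T. B$i$j = 0" using sep(2) 2 by blast
      moreover have "u = \<beta> *\<^sub>R restrict_vec T' z + \<alpha> *\<^sub>R restrict_vec T z" by (simp add: u_def)
      ultimately show ?thesis using part[OF swap(1) 2] combination_restrict_vec_on_part[OF 2 swap(2)]
        by (simp add: mult.assoc)
    next
      case 3
      then show ?thesis by (simp add: u_def restrict_vec_def)
    qed
  qed
  then show ?thesis by (simp add: inner_vec_def sum_distrib_left sum_mono)
qed

lemma split_combination_eigen_adj_closed:
  fixes B :: "real^'n^'n"
  assumes off_diag: "\<And>i j. i \<noteq> j \<Longrightarrow> B$i$j \<ge> 0"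
    and split: "T \<union> T' = {k. 0 \<le> z$k}" "T \<inter> T' = {}"
    and sep: "\<forall>a\<in>T. \<forall>b\<in>T'. B$a$b = 0"
    and super: "\<And>i. 0 \<le> z$i \<Longrightarrow> m * z$i \<le> (B *v z)$i"
    and eig: "B *v (\<alpha> *\<^sub>R restrict_vec T z + \<beta> *\<^sub>R restrict_vec T' z)
                = m *\<^sub>R (\<alpha> *\<^sub>R restrict_vec T z + \<beta> *\<^sub>R restrict_vec T' z)"
    and "\<alpha> \<noteq> 0"
  shows "\<forall>a\<in>T. \<forall>b. adj B a b \<longrightarrow> b \<in> T"
proof (intro ballI allI impI)
  fix a b assume a: "a \<in> T" and ab: "adj B a b"
  have "a \<in> T \<union> T'" using a by blast
  then have z_a: "0 \<le> z$a" using split(1) by simp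
  have outflow: "\<forall>j\<in>-T. B$a$j * z$j \<le> 0"
    using split_outflow_nonpos[OF off_diag split(1) a] sep a by blast
  have "\<alpha> * (B *v restrict_vec T z)$a = \<alpha> * (m * z$a)"
    using arg_cong[OF eig, of "\<lambda>w. w$a"] combination_restrict_vec_on_part[OF a split(2), of B] sep a
    by (simp add: mult.left_commute)
  then have "(B *v restrict_vec T z)$a \<le> (B *v z)$a" using \<open>\<alpha> \<noteq> 0\<close> super[OF z_a] by simp
  then have no_outflow: "\<forall>j\<in>-T. B$a$j * z$j = 0"
    by (rule restrict_vec_supersolution(2)[OF outflow])
  have B_ab: "B$a$b > 0" using ab by (simp add: adj_def)
  show "b \<in> T"
  proof (rule ccontr)
    assume "b \<notin> T"
    moreover have "b \<notin> T'" using sep a B_ab by auto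
    ultimately have "b \<notin> T \<union> T'" by blast
    then have "z$b \<noteq> 0" using split(1) by simp
    moreover have "B$a$b * z$b = 0" using no_outflow \<open>b \<notin> T\<close> by simp
    ultimately show False using B_ab by simp
  qed
qed

lemma split_combination_eigenvector:
  fixes B M :: "real^'n^'n" and v z :: "real^'n"
  assumes off_diag: "\<And>i j. i \<noteq> j \<Longrightarrow> B$i$j \<ge> 0"
    and split: "T \<union> T' = {k. 0 \<le> z$k}" "T \<inter> T' = {}"
    and sep: "\<forall>a\<in>T. \<forall>b\<in>T'. B$a$b = 0" "\<forall>a\<in>T'. \<forall>b\<in>T. B$a$b = 0"
    and super: "\<And>i. 0 \<le> z$i \<Longrightarrow> m * z$i \<le> (B *v z)$i"
    and sym_M: "transpose M = M"
    and rayleigh_M: "\<And>w. w \<bullet> (M *v w) \<le> m * (w \<bullet> w)"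
    and M_eq_B: "\<And>w. v \<bullet> w = 0 \<Longrightarrow> M *v w = B *v w"
  obtains \<alpha> \<beta> where "\<alpha> \<noteq> 0 \<or> \<beta> \<noteq> 0"
    "B *v (\<alpha> *\<^sub>R restrict_vec T z + \<beta> *\<^sub>R restrict_vec T' z)
       = m *\<^sub>R (\<alpha> *\<^sub>R restrict_vec T z + \<beta> *\<^sub>R restrict_vec T' z)"
proof -
  let ?w = "restrict_vec T z" and ?w' = "restrict_vec T' z"
  obtain \<alpha> \<beta> where ab: "\<alpha> \<noteq> 0 \<or> \<beta> \<noteq> 0" "\<alpha> * (v \<bullet> ?w) + \<beta> * (v \<bullet> ?w') = 0"
  proof (cases "v \<bullet> ?w' = 0")
    case True
    then show ?thesis using that[of 0 1] by simp
  next
    case False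
    then show ?thesis using that[of "v \<bullet> ?w'" "- (v \<bullet> ?w)"] by (simp add: mult.commute)
  qed
  define u where "u = \<alpha> *\<^sub>R ?w + \<beta> *\<^sub>R ?w'"
  have "m * (u \<bullet> u) \<le> u \<bullet> (B *v u)"
    unfolding u_def by (rule split_combination_rayleigh_ge[OF off_diag split sep super])
  moreover have "M *v u = B *v u" using ab(2) by (intro M_eq_B) (simp add: u_def inner_add_right)
  ultimately have "M *v u = m *\<^sub>R u"
    by (intro eigenvector_if_rayleigh_bound_attained[OF sym_M rayleigh_M]) simp
  then show ?thesis using that[OF ab(1)] \<open>M *v u = B *v u\<close> by (simp add: u_def)
qed

lemma nonneg_set_induced_connected:
  fixes B M :: "real^'n^'n" and v z :: "real^'n"
  assumes sym_B: "transpose B = B"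
    and off_diag: "\<And>i j. i \<noteq> j \<Longrightarrow> B$i$j \<ge> 0"
    and conn: "induced_connected B UNIV"
    and sym_M: "transpose M = M"
    and rayleigh_M: "\<And>w. w \<bullet> (M *v w) \<le> m * (w \<bullet> w)"
    and M_eq_B: "\<And>w. v \<bullet> w = 0 \<Longrightarrow> M *v w = B *v w"
    and super: "\<And>i. 0 \<le> z$i \<Longrightarrow> m * z$i \<le> (B *v z)$i"
  shows "induced_connected B {i. 0 \<le> z$i}"
proof (rule ccontr)
  assume "\<not> ?thesis"
  then obtain S1 S2 where split: "S1 \<union> S2 = {i. 0 \<le> z$i}" "S1 \<inter> S2 = {}"
      and ne: "S1 \<noteq> {}" "S2 \<noteq> {}"
      and no_adj: "\<And>a b. a \<in> S1 \<Longrightarrow> b \<in> S2 \<Longrightarrow> \<not> adj B a b \<and> \<not> adj B b a"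
    by (rule not_induced_connected_split[OF sym_B]) auto
  have "B$a$b = 0 \<and> B$b$a = 0" if "a \<in> S1" "b \<in> S2" for a b
  proof -
    have "a \<noteq> b" using that split(2) by blast
    then show ?thesis using no_adj[OF that] off_diag[of a b] off_diag[of b a] by (auto simp: adj_def)
  qed
  then have sep: "\<forall>a\<in>S1. \<forall>b\<in>S2. B$a$b = 0" "\<forall>a\<in>S2. \<forall>b\<in>S1. B$a$b = 0" by blast+
  have swap: "S2 \<union> S1 = {i. 0 \<le> z$i}" "S2 \<inter> S1 = {}"
    using split by (simp_all add: Un_commute Int_commute)
  have proper: "S1 \<noteq> UNIV" "S2 \<noteq> UNIV" using ne split(2) by auto
  obtain \<alpha> \<beta> where nonzero: "\<alpha> \<noteq> 0 \<or> \<beta> \<noteq> 0"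
    and eig: "B *v (\<alpha> *\<^sub>R restrict_vec S1 z + \<beta> *\<^sub>R restrict_vec S2 z)
                = m *\<^sub>R (\<alpha> *\<^sub>R restrict_vec S1 z + \<beta> *\<^sub>R restrict_vec S2 z)"
    by (rule split_combination_eigenvector[OF off_diag split sep super sym_M rayleigh_M M_eq_B])
  from nonzero show False
  proof
    assume "\<alpha> \<noteq> 0"
    with eig have "\<forall>a\<in>S1. \<forall>b. adj B a b \<longrightarrow> b \<in> S1"
      by (intro split_combination_eigen_adj_closed[OF off_diag split sep(1) super])
    then show False using adj_closed_eq_UNIV[OF conn] ne(1) proper(1) by blast
  next
    assume "\<beta> \<noteq> 0"
    moreover have "B *v (\<beta> *\<^sub>R restrict_vec S2 z + \<alpha> *\<^sub>R restrict_vec S1 z)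
                     = m *\<^sub>R (\<beta> *\<^sub>R restrict_vec S2 z + \<alpha> *\<^sub>R restrict_vec S1 z)"
      using eig by (simp only: add.commute)
    ultimately have "\<forall>a\<in>S2. \<forall>b. adj B a b \<longrightarrow> b \<in> S2"
      by (intro split_combination_eigen_adj_closed[OF off_diag swap sep(2) super])
    then show False using adj_closed_eq_UNIV[OF conn] ne(2) proper(2) by blast
  qed
qed

lemma rank_one_downdate_mult:
  "(B - \<sigma> *\<^sub>R outer v v) *v w = B *v w - (\<sigma> * (v \<bullet> w)) *\<^sub>R (v::real^'n)"
  by (simp add: vec_eq_iff matrix_vector_mult_def outer_def inner_vec_def
      sum_distrib_left algebra_simps sum_subtractf)

lemma shifted_eigenvector_supersolution:
  fixes B :: "real^'n^'n" and x y v :: "real^'n"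
  assumes sym: "transpose B = B"
    and off_diag: "\<And>i j. i \<noteq> j \<Longrightarrow> B$i$j \<ge> 0"
    and y_pos: "\<And>i. y$i > 0" and y_eig: "B *v y = l *\<^sub>R y"
    and x_eig: "(B - \<sigma> *\<^sub>R outer v v) *v x = m *\<^sub>R x" and "x \<noteq> 0"
    and "\<sigma> \<ge> 0" and v_nonneg: "\<And>i. v$i \<ge> 0" and "v \<bullet> x \<ge> 0" and "\<epsilon> \<ge> 0"
  shows "m * (x + \<epsilon> *\<^sub>R y)$i \<le> (B *v (x + \<epsilon> *\<^sub>R y))$i"
proof -
  have "B *v x - (\<sigma> * (v \<bullet> x)) *\<^sub>R v = m *\<^sub>R x"
    using x_eig by (simp only: rank_one_downdate_mult)
  then have Bx: "B *v x = m *\<^sub>R x + (\<sigma> * (v \<bullet> x)) *\<^sub>R v" by (simp add: diff_eq_eq)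
  have "m * (x \<bullet> x) \<le> x \<bullet> (B *v x)"
    using \<open>\<sigma> \<ge> 0\<close> by (simp add: Bx inner_add_right inner_commute mult.assoc)
  also have "\<dots> \<le> l * (x \<bullet> x)"
    by (rule rayleigh_le_eigenvalue_of_positive_eigenvector[OF sym off_diag y_pos y_eig])
  finally have "m \<le> l" using \<open>x \<noteq> 0\<close> by simp
  then have "\<epsilon> * m * y$i \<le> \<epsilon> * l * y$i"
    using \<open>\<epsilon> \<ge> 0\<close> y_pos[of i] by (intro mult_right_mono mult_left_mono) auto
  moreover have "0 \<le> \<sigma> * (v \<bullet> x) * v$i" using \<open>\<sigma> \<ge> 0\<close> \<open>v \<bullet> x \<ge> 0\<close> v_nonneg by simp
  ultimately show ?thesis
    by (simp add: matrix_vector_right_distrib matrix_vector_mult_scaleR Bx y_eig algebra_simps)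
qed

theorem theorem3p4:
  fixes A Delta :: "real^'n^'n" and v x y :: "real^'n" and sigma eps :: real
  assumes symA: "transpose A = A"
    and nonnegA: "\<forall>i j. A $ i $ j \<ge> 0"
    and connG: "induced_connected A UNIV"
    and diagD: "\<forall>i j. i \<noteq> j \<longrightarrow> Delta $ i $ j = 0"
    and v_nonneg: "\<forall>i. v $ i \<ge> 0" and v_nz: "v \<noteq> 0"
    and sigma_pos: "sigma > 0"
    and x_nz: "x \<noteq> 0"
    and x_eig: "(A + Delta - sigma *\<^sub>R outer v v) *v x
                  = lambda_max (A + Delta - sigma *\<^sub>R outer v v) *\<^sub>R x"
    and vx: "v \<bullet> x \<ge> 0"
    and y_pos: "\<forall>i. y $ i > 0"
    and y_eig: "(A + Delta) *v y = lambda_max (A + Delta) *\<^sub>R y"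
    and eps: "eps \<ge> 0"
  shows "induced_connected A {i. x $ i + eps * y $ i \<ge> 0}"
proof -
  define B where "B = A + Delta"
  define M where "M = B - sigma *\<^sub>R outer v v"
  have B_off_diag: "B$i$j = A$i$j" if "i \<noteq> j" for i j using diagD that by (simp add: B_def)
  then have adj_B: "adj B = adj A" by (auto simp: adj_def fun_eq_iff)
  have B_nonneg: "0 \<le> B$i$j" if "i \<noteq> j" for i j using B_off_diag[OF that] nonnegA by simp
  have "A$i$j = A$j$i" "Delta$i$j = Delta$j$i" for i j
    using symA diagD by (metis transpose_def vec_lambda_beta)+
  then have sym_B: "transpose B = B" and sym_M: "transpose M = M"
    by (simp_all add: M_def B_def transpose_def outer_def vec_eq_iff mult.commute)
  have y_eig_B: "B *v y = lambda_max B *\<^sub>R y" unfolding B_def by (rule y_eig)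
  have x_eig_M: "(B - sigma *\<^sub>R outer v v) *v x = lambda_max M *\<^sub>R x"
    unfolding M_def B_def by (rule x_eig)
  have "induced_connected B {i. 0 \<le> (x + eps *\<^sub>R y)$i}"
  proof (rule nonneg_set_induced_connected[OF sym_B B_nonneg _ sym_M rayleigh_le_lambda_max[OF sym_M]])
    show "induced_connected B UNIV" using connG by (simp add: induced_connected_def adj_B)
    show "M *v w = B *v w" if "v \<bullet> w = 0" for w using that by (simp add: M_def rank_one_downdate_mult)
    show "lambda_max M * (x + eps *\<^sub>R y)$i \<le> (B *v (x + eps *\<^sub>R y))$i" for i
      using shifted_eigenvector_supersolution[OF sym_B B_nonneg _ y_eig_B x_eig_M x_nz] y_pos
        sigma_pos v_nonneg vx eps by simp
  qed
  then show ?thesis by (simp add: induced_connected_def adj_B)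
qed

end
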